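(* Let $n\ge2$, let $0<f_1\le\dots\le f_n$ and $F_j=\sum_{i=1}^j f_i$. For $k\in\{1,\ldots,n-1\}$ let $X_k=1/(F_{n-k}+Z_k)^2$ where $Z_k\sim\Gamma\big(k,e\binom n2/k\big)$. Then for any $k\in\{3,\ldots,n-1\}$, $$\mathbb{E}[X_k^2]-(\mathbb{E}[X_k])^2\le O\left(\frac{k^3n^{12}F_{n-k}^3+k^9n^6}{n^{16}F_{n-k}^9+k^{16}F_{n-k}}\right),$$ whereas for $k=1$ and $k=2$, $$\mathbb{E}[X_1^2]-(\mathbb{E}[X_1])^2\le O\left(\frac{n^6F_{n-1}^2+n^2}{n^8F_{n-1}^7+F_{n-1}^3}\right),\qquad \mathbb{E}[X_2^2]-(\mathbb{E}[X_2])^2\le O\left(\frac{n^{10}F_{n-2}^3+n^4}{n^{14}F_{n-2}^9+F_{n-2}^2}\right).$$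
   Context: $\Gamma(k,\lambda)$ denotes the distribution of the sum of $k$ independent exponential random variables with rate $\lambda$, i.e. density $\lambda^k x^{k-1}e^{-\lambda x}/(k-1)!$ on $x>0$. *)

theory Defs
  imports "HOL-Probability.Probability"
begin

definition gamma_density :: "nat \<Rightarrow> real \<Rightarrow> real \<Rightarrow> real" where
  "gamma_density k l x = (if x > 0 then l ^ k * x ^ (k - 1) * exp (- l * x) / fact (k - 1) else 0)"

definition gamma_measure :: "nat \<Rightarrow> real \<Rightarrow> real measure" where
  "gamma_measure k l = density lborel (\<lambda>x. ennreal (gamma_density k l x))"

definition Fsum :: "(nat \<Rightarrow> real) \<Rightarrow> nat \<Rightarrow> real" where
  "Fsum f j = (\<Sum>i = 1..j. f i)"

definition rateZ :: "nat \<Rightarrow> nat \<Rightarrow> real" where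
  "rateZ n k = exp 1 * real (n choose 2) / real k"

definition varX :: "nat \<Rightarrow> (nat \<Rightarrow> real) \<Rightarrow> nat \<Rightarrow> real" where
  "varX n f k =
     (\<integral>z. (1 / (Fsum f (n - k) + z) ^ 2) ^ 2 \<partial>gamma_measure k (rateZ n k))
     - (\<integral>z. 1 / (Fsum f (n - k) + z) ^ 2 \<partial>gamma_measure k (rateZ n k)) ^ 2"

end

theory Submission
  imports Defs
begin

text \<open>
  Let \<open>Z\<close> have law \<open>\<Gamma>(k, l)\<close> and put \<open>g z = 1 / (F + z)\<^sup>2\<close>; the rate
  \<open>l = e (n choose 2) / k\<close> lies between \<open>n\<^sup>2 / (2k)\<close> and \<open>2 n\<^sup>2 / k\<close>. For every
  constant \<open>a\<close> the variance of \<open>g Z\<close> is at most \<open>E[(g Z - a)\<^sup>2]\<close>, and three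
  choices of \<open>a\<close> suffice:
  \<^item> \<open>a = g m\<close> with \<open>m = E Z\<close>, and \<open>|g'| \<le> 2 / F\<^sup>3\<close>, give \<open>4 k / (l\<^sup>2 F\<^sup>6)\<close>;
  \<^item> \<open>a = 0\<close> and \<open>g z\<^sup>2 \<le> 1 / (F z\<^sup>3)\<close> give \<open>l\<^sup>3 / F\<close> when \<open>k \<ge> 4\<close>; for \<open>k \<le> 3\<close>,
    where \<open>E[1 / Z\<^sup>3]\<close> is infinite, integrating \<open>g\<^sup>2\<close> against the density gives
    \<open>l\<^sup>k / F\<^sup>4\<^sup>-\<^sup>k\<close> up to a constant;
  \<^item> for \<open>k \<ge> 7\<close>, \<open>a = g m\<close> and \<open>|g z - g m| \<le> 2 |z - m| max (1/z) (1/m)\<^sup>3\<close> give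
    \<open>O(l\<^sup>4 / k\<^sup>5)\<close>, since a negative moment of \<open>\<Gamma>(k, l)\<close> is a multiple of a moment of
    \<open>\<Gamma>(k - j, l)\<close>.
  Each bound of the theorem has the form \<open>(P\<^sub>1 + P\<^sub>2) / (Q\<^sub>1 + Q\<^sub>2)\<close>, so it suffices to
  bound the variance by a multiple of \<open>P\<^sub>i / Q\<^sub>i\<close> in the regime where \<open>Q\<^sub>i\<close> is the
  larger denominator.
\<close>

section \<open>The Gamma distribution\<close>

lemma gamma_density_nonneg: "0 \<le> l \<Longrightarrow> 0 \<le> gamma_density k l x"
  by (simp add: gamma_density_def)

lemma borel_measurable_gamma_density[measurable]: "gamma_density k l \<in> borel_measurable borel"
  unfolding gamma_density_def[abs_def] by measurable

lemma gamma_density_eq_erlang_density: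
  "1 \<le> k \<Longrightarrow> x \<noteq> 0 \<Longrightarrow> gamma_density k l x = erlang_density (k - 1) l x"
  by (cases k) (auto simp: gamma_density_def erlang_density_def)

lemma nn_integral_gamma_density:
  assumes "1 \<le> k" "0 < l"
  shows "(\<integral>\<^sup>+ x. ennreal (gamma_density k l x) \<partial>lborel) = 1"
proof -
  have "(\<integral>\<^sup>+ x. ennreal (gamma_density k l x) \<partial>lborel) =
        (\<integral>\<^sup>+ x. ennreal (erlang_density (k - 1) l x * x ^ 0) \<partial>lborel)"
    using AE_lborel_singleton[of 0]
    by (intro nn_integral_cong_AE, eventually_elim) (simp add: gamma_density_eq_erlang_density[OF assms(1)])
  also have "\<dots> = 1"
    using nn_integral_erlang_ith_moment[OF assms(2), of "k - 1" 0] by simp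
  finally show ?thesis .
qed

lemma has_bochner_integral_gamma_density:
  "1 \<le> k \<Longrightarrow> 0 < l \<Longrightarrow> has_bochner_integral lborel (gamma_density k l) 1"
  by (rule has_bochner_integral_nn_integral) (auto simp: nn_integral_gamma_density gamma_density_nonneg)

lemma prob_space_gamma_measure: "1 \<le> k \<Longrightarrow> 0 < l \<Longrightarrow> prob_space (gamma_measure k l)"
  by (rule prob_spaceI) (simp add: gamma_measure_def emeasure_density nn_integral_gamma_density)

lemma sets_gamma_measure [measurable_cong]: "sets (gamma_measure k l) = sets borel"
  by (simp add: gamma_measure_def)

lemma AE_gamma_measure_pos: "AE x in gamma_measure k l. 0 < x"
  unfolding gamma_measure_def by (subst AE_density) (auto simp: gamma_density_def)

lemma has_bochner_integral_gamma_measure_iff: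
  assumes "0 < l" "h \<in> borel_measurable borel"
  shows "has_bochner_integral (gamma_measure k l) h v \<longleftrightarrow>
         has_bochner_integral lborel (\<lambda>x. gamma_density k l x * h x) v"
  unfolding gamma_measure_def has_bochner_integral_iff
  using assms by (simp add: integrable_real_density integral_real_density gamma_density_nonneg)

lemma gamma_density_mult_power:
  assumes "1 \<le> k" "0 < l"
  shows "gamma_density k l x * x ^ i = fact (k + i - 1) / (fact (k - 1) * l ^ i) * gamma_density (k + i) l x"
proof (cases "0 < x")
  case True
  have "x ^ (k - 1) * x ^ i = x ^ (k + i - 1)"
    using assms(1) by (simp flip: power_add)
  moreover have "l ^ (k + i) = l ^ k * l ^ i"
    by (simp add: power_add)
  ultimately show ?thesis
    using True assms by (simp add: gamma_density_def field_simps)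
qed (simp add: gamma_density_def)

lemma gamma_density_div_power:
  assumes "j < k" "0 < l"
  shows "gamma_density k l x / x ^ j = l ^ j * fact (k - j - 1) / fact (k - 1) * gamma_density (k - j) l x"
proof (cases "0 < x")
  case True
  have "x ^ (k - 1) = x ^ (k - j - 1) * x ^ j" and "l ^ k = l ^ j * l ^ (k - j)"
    using assms(1) by (simp_all flip: power_add)
  then show ?thesis
    using True assms by (simp add: gamma_density_def field_simps)
qed (simp add: gamma_density_def)

lemma has_bochner_integral_gamma_ith_moment:
  assumes "1 \<le> k" "0 < l"
  shows "has_bochner_integral (gamma_measure k l) (\<lambda>x. x ^ i) (fact (k + i - 1) / (fact (k - 1) * l ^ i))"
proof -
  have "has_bochner_integral lborel
          (\<lambda>x. fact (k + i - 1) / (fact (k - 1) * l ^ i) * gamma_density (k + i) l x)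
          (fact (k + i - 1) / (fact (k - 1) * l ^ i) * 1)"
    by (intro has_bochner_integral_mult_right has_bochner_integral_gamma_density) (use assms in auto)
  then show ?thesis
    using assms by (simp only: has_bochner_integral_gamma_measure_iff gamma_density_mult_power
        mult_1_right borel_measurable_power measurable_ident_sets)
qed

lemma has_bochner_integral_gamma_measure_div_power:
  assumes "j < k" "0 < l" "h \<in> borel_measurable borel"
    and "has_bochner_integral (gamma_measure (k - j) l) h v"
  shows "has_bochner_integral (gamma_measure k l) (\<lambda>x. h x / x ^ j) (l ^ j * fact (k - j - 1) / fact (k - 1) * v)"
proof -
  have "has_bochner_integral lborel
          (\<lambda>x. l ^ j * fact (k - j - 1) / fact (k - 1) * (gamma_density (k - j) l x * h x))
          (l ^ j * fact (k - j - 1) / fact (k - 1) * v)"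
    using assms(4) by (intro has_bochner_integral_mult_right)
      (simp add: has_bochner_integral_gamma_measure_iff[OF assms(2,3)])
  moreover have "gamma_density k l x * (h x / x ^ j) =
      l ^ j * fact (k - j - 1) / fact (k - 1) * (gamma_density (k - j) l x * h x)" for x
  proof -
    have "gamma_density k l x * (h x / x ^ j) = gamma_density k l x / x ^ j * h x"
      by simp
    then show ?thesis
      by (simp only: gamma_density_div_power[OF assms(1,2)] mult.assoc)
  qed
  ultimately show ?thesis
    using assms by (simp add: has_bochner_integral_gamma_measure_iff)
qed

lemma has_bochner_integral_gamma_sq_dev:
  assumes "1 \<le> k" "0 < l"
  shows "has_bochner_integral (gamma_measure k l) (\<lambda>z. (z - m)\<^sup>2) (k / l\<^sup>2 + (k / l - m)\<^sup>2)"
proof -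
  obtain q where k: "k = Suc q"
    using assms(1) by (cases k) auto
  have "has_bochner_integral (gamma_measure k l) (\<lambda>z. z ^ 2 - 2 * m * z ^ 1 + m\<^sup>2 * z ^ 0)
     (fact (k + 2 - 1) / (fact (k - 1) * l ^ 2) - 2 * m * (fact (k + 1 - 1) / (fact (k - 1) * l ^ 1))
      + m\<^sup>2 * (fact (k + 0 - 1) / (fact (k - 1) * l ^ 0)))"
    by (intro has_bochner_integral_add has_bochner_integral_diff has_bochner_integral_mult_right
        has_bochner_integral_gamma_ith_moment assms)
  moreover have "(\<lambda>z. z ^ 2 - 2 * m * z ^ 1 + m\<^sup>2 * z ^ 0) = (\<lambda>z. (z - m)\<^sup>2)"
    by (simp add: fun_eq_iff power2_diff algebra_simps)
  moreover have "fact (k + 2 - 1) / (fact (k - 1) * l ^ 2) - 2 * m * (fact (k + 1 - 1) / (fact (k - 1) * l ^ 1))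
      + m\<^sup>2 * (fact (k + 0 - 1) / (fact (k - 1) * l ^ 0)) = k / l\<^sup>2 + (k / l - m)\<^sup>2"
  proof -
    have "fact (k + 2 - 1) = (real k + 1) * k * fact (k - 1)" "fact (k + 1 - 1) = real k * fact (k - 1)"
      by (simp_all add: k algebra_simps)
    then show ?thesis
      using assms(2) by (simp add: power2_eq_square field_simps)
  qed
  ultimately show ?thesis
    by simp
qed

section \<open>Variance of the inverse square of a shifted Gamma variable\<close>

lemma (in prob_space) second_moment_minus_sq_le:
  fixes X :: "'a \<Rightarrow> real"
  assumes "integrable M X" "integrable M (\<lambda>x. X x ^ 2)"
    and "integrable M h" "AE x in M. (X x - a)\<^sup>2 \<le> h x"
  shows "expectation (\<lambda>x. X x ^ 2) - (expectation X)\<^sup>2 \<le> expectation h"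
proof -
  have "integrable M (\<lambda>x. (X x - a)\<^sup>2)"
    using assms(1,2) by (simp add: power2_diff)
  then have "expectation (\<lambda>x. (X x - a)\<^sup>2) \<le> expectation h"
    using assms(3,4) by (rule integral_mono_AE)
  moreover have "expectation (\<lambda>x. (X x - a)\<^sup>2) = expectation (\<lambda>x. X x ^ 2) - 2 * a * expectation X + a\<^sup>2"
    using assms(1,2) by (simp add: power2_diff prob_space)
  moreover have "0 \<le> (expectation X)\<^sup>2 - 2 * a * expectation X + a\<^sup>2"
    using zero_le_power2[of "expectation X - a"] by (simp add: power2_diff ac_simps)
  ultimately show ?thesis by linarith
qed

definition var_inv_sq_gamma :: "nat \<Rightarrow> real \<Rightarrow> real \<Rightarrow> real" where
  "var_inv_sq_gamma k l F =
     (\<integral>z. (1 / (F + z) ^ 2) ^ 2 \<partial>gamma_measure k l) - (\<integral>z. 1 / (F + z) ^ 2 \<partial>gamma_measure k l) ^ 2"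

lemma integrable_inv_sq_power_gamma:
  assumes "1 \<le> k" "0 < l" "0 < F"
  shows "integrable (gamma_measure k l) (\<lambda>z. (1 / (F + z) ^ 2) ^ p)"
proof -
  interpret prob_space "gamma_measure k l"
    using assms(1,2) by (rule prob_space_gamma_measure)
  show ?thesis
  proof (rule integrable_const_bound[where B = "(1 / F ^ 2) ^ p"])
    show "AE z in gamma_measure k l. norm ((1 / (F + z) ^ 2) ^ p) \<le> (1 / F ^ 2) ^ p"
      using AE_gamma_measure_pos
      by eventually_elim (use assms(3) in \<open>auto intro!: power_mono divide_left_mono\<close>)
  qed simp
qed

lemma var_inv_sq_gamma_le_sq_dev:
  assumes "1 \<le> k" "0 < l" "0 < F"
    and "has_bochner_integral (gamma_measure k l) h v"
    and "AE z in gamma_measure k l. (1 / (F + z) ^ 2 - a)\<^sup>2 \<le> h z"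
  shows "var_inv_sq_gamma k l F \<le> v"
proof -
  interpret prob_space "gamma_measure k l"
    using assms(1,2) by (rule prob_space_gamma_measure)
  have "integrable (gamma_measure k l) (\<lambda>z. 1 / (F + z) ^ 2)"
    using integrable_inv_sq_power_gamma[OF assms(1-3), of 1] by simp
  then have "var_inv_sq_gamma k l F \<le> (\<integral>z. h z \<partial>gamma_measure k l)"
    unfolding var_inv_sq_gamma_def
    using integrable_inv_sq_power_gamma[OF assms(1-3), of 2] assms(4,5)
    by (intro second_moment_minus_sq_le) (auto simp: has_bochner_integral_iff)
  then show ?thesis
    using assms(4) by (simp add: has_bochner_integral_iff)
qed

lemma inverse_square_diff_le:
  fixes a b u v :: real
  assumes "0 < a" "a \<le> u" "0 < b" "b \<le> v"
  shows "\<bar>1 / u\<^sup>2 - 1 / v\<^sup>2\<bar> \<le> \<bar>u - v\<bar> * (1 / (a * b\<^sup>2) + 1 / (a\<^sup>2 * b))"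
proof -
  have "1 / u\<^sup>2 - 1 / v\<^sup>2 = (v - u) * (1 / (u * v\<^sup>2) + 1 / (u\<^sup>2 * v))"
    using assms by (simp add: field_simps power2_eq_square)
  moreover have "1 / (u * v\<^sup>2) \<le> 1 / (a * b\<^sup>2)" "1 / (u\<^sup>2 * v) \<le> 1 / (a\<^sup>2 * b)"
    using assms by (auto intro!: divide_left_mono mult_mono power_mono)
  ultimately show ?thesis
    using assms by (simp add: abs_mult abs_minus_commute mult_left_mono add_mono)
qed

lemma inv_sq_shift_diff_sq_le_Lipschitz:
  fixes F z m :: real
  assumes "0 < F" "0 \<le> z" "0 \<le> m"
  shows "(1 / (F + z)\<^sup>2 - 1 / (F + m)\<^sup>2)\<^sup>2 \<le> 4 / F ^ 6 * (z - m)\<^sup>2"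
proof -
  have "\<bar>1 / (F + z)\<^sup>2 - 1 / (F + m)\<^sup>2\<bar> \<le> \<bar>z - m\<bar> * (2 / F ^ 3)"
    using inverse_square_diff_le[of F "F + z" F "F + m"] assms
    by (simp add: power2_eq_square power3_eq_cube)
  then have "(1 / (F + z)\<^sup>2 - 1 / (F + m)\<^sup>2)\<^sup>2 \<le> (\<bar>z - m\<bar> * (2 / F ^ 3))\<^sup>2"
    by (metis abs_ge_zero power2_abs power_mono)
  also have "\<dots> = 4 / F ^ 6 * (z - m)\<^sup>2"
    by (simp add: power_mult_distrib power_divide flip: power_mult)
  finally show ?thesis .
qed

lemma inv_sq_shift_diff_sq_le:
  fixes F z m :: real
  assumes "0 \<le> F" "0 < z" "0 < m"
  shows "(1 / (F + z)\<^sup>2 - 1 / (F + m)\<^sup>2)\<^sup>2 \<le> 4 * (z - m)\<^sup>2 * (1 / z ^ 6 + 1 / m ^ 6)"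
proof -
  define w where "w = max (1 / z) (1 / m)"
  have w: "0 \<le> 1 / z" "1 / z \<le> w" "0 \<le> 1 / m" "1 / m \<le> w" "0 \<le> w"
    using assms by (auto simp: w_def le_max_iff_disj)
  have "1 / (z * m\<^sup>2) = (1 / z) * (1 / m)\<^sup>2"
    by (simp add: power_one_over)
  also have "\<dots> \<le> w * w\<^sup>2"
    by (intro mult_mono power_mono) (use w in auto)
  finally have 1: "1 / (z * m\<^sup>2) \<le> w ^ 3"
    by (simp add: power3_eq_cube power2_eq_square)
  have "1 / (z\<^sup>2 * m) = (1 / z)\<^sup>2 * (1 / m)"
    by (simp add: power_one_over)
  also have "\<dots> \<le> w\<^sup>2 * w"
    by (intro mult_mono power_mono) (use w in auto)
  finally have 2: "1 / (z\<^sup>2 * m) \<le> w ^ 3"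
    by (simp add: power3_eq_cube power2_eq_square)
  have "\<bar>1 / (F + z)\<^sup>2 - 1 / (F + m)\<^sup>2\<bar> \<le> \<bar>z - m\<bar> * (1 / (z * m\<^sup>2) + 1 / (z\<^sup>2 * m))"
    using inverse_square_diff_le[of z "F + z" m "F + m"] assms by simp
  also have "\<dots> \<le> \<bar>z - m\<bar> * (2 * w ^ 3)"
    using 1 2 by (intro mult_left_mono) auto
  finally have "(1 / (F + z)\<^sup>2 - 1 / (F + m)\<^sup>2)\<^sup>2 \<le> (\<bar>z - m\<bar> * (2 * w ^ 3))\<^sup>2"
    by (metis abs_ge_zero power2_abs power_mono)
  also have "\<dots> = 4 * (z - m)\<^sup>2 * w ^ 6"
    by (simp add: power_mult_distrib flip: power_mult)
  also have "w ^ 6 \<le> 1 / z ^ 6 + 1 / m ^ 6"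
    by (simp add: w_def max_def power_one_over)
  finally show ?thesis
    by (simp add: mult_left_mono)
qed

lemma inv_sq_shift_sq_le:
  fixes F z :: real
  assumes "0 < F" "0 < z"
  shows "(1 / (F + z)\<^sup>2)\<^sup>2 \<le> 1 / F * (1 / z ^ 3)"
proof -
  have "F * z ^ 3 \<le> (F + z) * (F + z) ^ 3"
    using assms by (intro mult_mono power_mono) auto
  then show ?thesis
    using assms by (simp add: divide_simps flip: power_mult power_Suc)
qed

lemma var_inv_sq_gamma_le_Lipschitz:
  assumes "1 \<le> k" "0 < l" "0 < F"
  shows "var_inv_sq_gamma k l F \<le> 4 * real k / (l\<^sup>2 * F ^ 6)"
proof -
  define m where "m = k / l"
  have "has_bochner_integral (gamma_measure k l) (\<lambda>z. 4 / F ^ 6 * (z - m)\<^sup>2) (4 / F ^ 6 * (k / l\<^sup>2 + (k / l - m)\<^sup>2))"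
    by (intro has_bochner_integral_mult_right has_bochner_integral_gamma_sq_dev assms)
  moreover have "AE z in gamma_measure k l. (1 / (F + z)\<^sup>2 - 1 / (F + m)\<^sup>2)\<^sup>2 \<le> 4 / F ^ 6 * (z - m)\<^sup>2"
    using AE_gamma_measure_pos
    by eventually_elim (rule inv_sq_shift_diff_sq_le_Lipschitz, use assms in \<open>auto simp: m_def\<close>)
  ultimately have "var_inv_sq_gamma k l F \<le> 4 / F ^ 6 * (k / l\<^sup>2 + (k / l - m)\<^sup>2)"
    using assms by (intro var_inv_sq_gamma_le_sq_dev)
  then show ?thesis
    by (simp add: m_def mult.commute)
qed

lemma has_bochner_integral_inverse_power_shifted:
  fixes F :: real and p :: nat
  assumes "0 < F" "2 \<le> p"
  shows "has_bochner_integral lborel (\<lambda>z. indicator {0..} z / (F + z) ^ p) (1 / ((p - 1) * F ^ (p - 1)))"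
proof -
  obtain r where p: "p = Suc (Suc r)"
    using assms(2) by (metis add_2_eq_Suc le_Suc_ex)
  define G where "G z = - inverse (Suc r) * inverse ((F + z) ^ Suc r)" for z
  have "DERIV G z :> 1 / (F + z) ^ p" if "0 \<le> z" for z
  proof -
    have pos: "0 < F + z"
      using assms(1) that by simp
    have "DERIV (\<lambda>z. (F + z) ^ Suc r) z :> (1 + real r) * (1 * (F + z) ^ r)"
      by (intro DERIV_power_Suc) (auto intro!: derivative_eq_intros)
    then have "DERIV G z :> - inverse (Suc r) *
        - (inverse ((F + z) ^ Suc r) * ((1 + real r) * (1 * (F + z) ^ r)) * inverse ((F + z) ^ Suc r))"
      unfolding G_def using pos by (intro DERIV_cmult DERIV_inverse') auto
    moreover have "- inverse (Suc r) * - (inverse (w ^ Suc r) * ((1 + real r) * (1 * w ^ r))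
        * inverse (w ^ Suc r)) = 1 / w ^ p" if "0 < w" for w :: real
      using that by (simp add: p divide_simps)
    ultimately show ?thesis
      using pos by (blast intro: DERIV_cong)
  qed
  moreover have "(G \<longlongrightarrow> 0) at_top"
  proof -
    have "filterlim (\<lambda>z. (F + z) ^ Suc r) at_top at_top"
      by (intro filterlim_pow_at_top filterlim_tendsto_add_at_top[OF tendsto_const filterlim_ident]) auto
    then show ?thesis
      unfolding G_def by (intro tendsto_mult_right_zero tendsto_inverse_0_at_top)
  qed
  ultimately have "(\<integral>\<^sup>+z. ennreal (1 / (F + z) ^ p) * indicator {0..} z \<partial>lborel) = 0 - G 0"
    using assms(1) by (intro nn_integral_FTC_atLeast) auto
  then have "(\<integral>\<^sup>+z. ennreal (indicator {0..} z / (F + z) ^ p) \<partial>lborel) = ennreal (1 / ((p - 1) * F ^ (p - 1)))"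
    by (simp add: G_def p indicator_mult_ennreal mult.commute field_simps)
  then show ?thesis
    using assms(1) by (intro has_bochner_integral_nn_integral) (auto split: split_indicator)
qed

lemma gamma_density_mult_inv_sq_sq_le:
  assumes "1 \<le> k" "k \<le> 3" "0 < l" "0 < F"
  shows "gamma_density k l z * (1 / (F + z)\<^sup>2)\<^sup>2 \<le> l ^ k / fact (k - 1) * (indicator {0..} z / (F + z) ^ (5 - k))"
proof (cases "0 < z")
  case True
  have "gamma_density k l z * (1 / (F + z)\<^sup>2)\<^sup>2 = l ^ k / fact (k - 1) * (z ^ (k - 1) * exp (- l * z) / (F + z) ^ 4)"
    using True by (simp add: gamma_density_def power_one_over flip: power_mult)
  also have "\<dots> \<le> l ^ k / fact (k - 1) * ((F + z) ^ (k - 1) * 1 / (F + z) ^ 4)"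
    using True assms by (intro mult_left_mono divide_right_mono mult_mono power_mono) auto
  also have "(F + z) ^ 4 = (F + z) ^ (k - 1) * (F + z) ^ (5 - k)"
    using assms(1,2) by (simp flip: power_add)
  finally show ?thesis
    using True assms by simp
qed (use assms in \<open>auto simp: gamma_density_def split: split_indicator\<close>)

lemma var_inv_sq_gamma_le_small_shape:
  assumes "1 \<le> k" "k \<le> 3" "0 < l" "0 < F"
  shows "var_inv_sq_gamma k l F \<le> l ^ k / (fact (k - 1) * real (4 - k) * F ^ (4 - k))"
proof -
  let ?g2 = "\<lambda>z. (1 / (F + z)\<^sup>2)\<^sup>2" and ?c = "l ^ k / fact (k - 1)"
  have "integrable (gamma_measure k l) ?g2"
    using assms by (intro integrable_inv_sq_power_gamma) auto
  then have hb: "has_bochner_integral (gamma_measure k l) ?g2 (\<integral>z. ?g2 z \<partial>gamma_measure k l)"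
    by (simp add: has_bochner_integral_iff)
  then have "var_inv_sq_gamma k l F \<le> (\<integral>z. ?g2 z \<partial>gamma_measure k l)"
    using assms by (intro var_inv_sq_gamma_le_sq_dev[where a = 0]) auto
  also have "\<dots> \<le> ?c * (1 / ((5 - k - 1) * F ^ (5 - k - 1)))"
  proof -
    have lhs: "has_bochner_integral lborel (\<lambda>z. gamma_density k l z * ?g2 z) (\<integral>z. ?g2 z \<partial>gamma_measure k l)"
      using hb has_bochner_integral_gamma_measure_iff[OF assms(3), of ?g2] by simp
    have rhs: "has_bochner_integral lborel (\<lambda>z. ?c * (indicator {0..} z / (F + z) ^ (5 - k)))
        (?c * (1 / ((5 - k - 1) * F ^ (5 - k - 1))))"
      using assms by (intro has_bochner_integral_mult_right has_bochner_integral_inverse_power_shifted) auto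
    have "(\<integral>z. gamma_density k l z * ?g2 z \<partial>lborel) \<le> (\<integral>z. ?c * (indicator {0..} z / (F + z) ^ (5 - k)) \<partial>lborel)"
      using lhs rhs gamma_density_mult_inv_sq_sq_le[OF assms]
      by (intro integral_mono) (auto simp: has_bochner_integral_iff)
    with lhs rhs show ?thesis
      by (simp add: has_bochner_integral_iff)
  qed
  also have "\<dots> = l ^ k / (fact (k - 1) * real (4 - k) * F ^ (4 - k))"
    by (simp add: diff_diff_left)
  finally show ?thesis .
qed

lemma var_inv_sq_gamma_le_cube:
  assumes "3 \<le> k" "0 < l" "0 < F"
  shows "var_inv_sq_gamma k l F \<le> l ^ 3 / F"
proof (cases "k = 3")
  case True
  then have "var_inv_sq_gamma k l F \<le> l ^ 3 / (2 * F)"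
    using var_inv_sq_gamma_le_small_shape[of k l F] assms by (simp add: numeral_eq_Suc)
  also have "\<dots> \<le> l ^ 3 / F"
    using assms by (simp add: divide_left_mono)
  finally show ?thesis .
next
  case False
  then have k: "3 < k"
    using assms(1) by simp
  have "has_bochner_integral (gamma_measure (k - 3) l) (\<lambda>z. 1 / F * z ^ 0)
      (1 / F * (fact (k - 3 + 0 - 1) / (fact (k - 3 - 1) * l ^ 0)))"
    using k assms(2) by (intro has_bochner_integral_mult_right has_bochner_integral_gamma_ith_moment) auto
  then have "has_bochner_integral (gamma_measure (k - 3) l) (\<lambda>z. 1 / F) (1 / F)"
    by simp
  from has_bochner_integral_gamma_measure_div_power[OF _ assms(2) _ this]
  have "has_bochner_integral (gamma_measure k l) (\<lambda>z. 1 / F / z ^ 3) (l ^ 3 * fact (k - 3 - 1) / fact (k - 1) * (1 / F))"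
    using k by simp
  moreover have "AE z in gamma_measure k l. (1 / (F + z)\<^sup>2 - 0)\<^sup>2 \<le> 1 / F / z ^ 3"
    using AE_gamma_measure_pos by eventually_elim (use assms(3) inv_sq_shift_sq_le in auto)
  ultimately have "var_inv_sq_gamma k l F \<le> l ^ 3 * fact (k - 3 - 1) / fact (k - 1) * (1 / F)"
    using assms by (intro var_inv_sq_gamma_le_sq_dev[where a = 0]) auto
  also have "\<dots> = l ^ 3 / F * (fact (k - 3 - 1) / fact (k - 1))"
    by simp
  also have "\<dots> \<le> l ^ 3 / F * 1"
    using assms by (intro mult_left_mono) (auto simp: divide_le_eq_1 fact_mono)
  finally show ?thesis
    by simp
qed

lemma fact_mult_power_le_fact_add: "fact n * (real n + 1) ^ d \<le> fact (n + d)"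
proof (induction d)
  case (Suc d)
  have "fact n * (real n + 1) ^ Suc d = (real n + 1) * (fact n * (real n + 1) ^ d)"
    by simp
  also have "\<dots> \<le> (real (n + d) + 1) * fact (n + d)"
    using Suc.IH by (intro mult_mono) auto
  also have "\<dots> = fact (n + Suc d)"
    by (simp add: algebra_simps)
  finally show ?case .
qed simp

lemma shifted_fact_ratio_le:
  assumes "7 \<le> k"
  shows "(real k + 30) * fact (k - 7) / fact (k - 1) \<le> 6 * 7 ^ 6 / real k ^ 5"
proof -
  have k: "0 < real k" "real k / 7 \<le> real (k - 7) + 1"
    using assms by (auto simp: of_nat_diff)
  have "fact (k - 7) * (real k / 7) ^ 6 \<le> fact (k - 7) * (real (k - 7) + 1) ^ 6"
    using k by (intro mult_left_mono power_mono) auto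
  also have "\<dots> \<le> fact (k - 7 + 6)"
    by (rule fact_mult_power_le_fact_add)
  also have "k - 7 + 6 = k - 1"
    using assms by simp
  finally have fact_ratio: "fact (k - 7) / fact (k - 1) \<le> 1 / (real k / 7) ^ 6"
    using k by (simp add: field_simps)
  have "(real k + 30) * fact (k - 7) / fact (k - 1) = (real k + 30) * (fact (k - 7) / fact (k - 1))"
    by simp
  also have "\<dots> \<le> (6 * real k) * (1 / (real k / 7) ^ 6)"
    using assms fact_ratio by (intro mult_mono) auto
  also have "\<dots> = 6 * 7 ^ 6 / real k ^ 5"
    using k by (simp add: field_simps eval_nat_numeral)
  finally show ?thesis .
qed

lemma has_bochner_integral_gamma_centered_sq_div_power_6:
  assumes "7 \<le> k" "0 < l"
  shows "has_bochner_integral (gamma_measure k l) (\<lambda>z. (z - k / l)\<^sup>2 / z ^ 6)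
    (l ^ 4 * ((real k + 30) * fact (k - 7) / fact (k - 1)))"
proof -
  have "has_bochner_integral (gamma_measure k l) (\<lambda>z. (z - k / l)\<^sup>2 / z ^ 6)
      (l ^ 6 * fact (k - 6 - 1) / fact (k - 1) * (real (k - 6) / l\<^sup>2 + (real (k - 6) / l - k / l)\<^sup>2))"
    by (rule has_bochner_integral_gamma_measure_div_power)
      (use assms has_bochner_integral_gamma_sq_dev[of "k - 6" l "k / l"] in auto)
  moreover have "l ^ 6 * fact (k - 6 - 1) / fact (k - 1) * (real (k - 6) / l\<^sup>2 + (real (k - 6) / l - k / l)\<^sup>2)
      = l ^ 4 * ((real k + 30) * fact (k - 7) / fact (k - 1))"
  proof -
    have "real (k - 6) / l\<^sup>2 + (real (k - 6) / l - k / l)\<^sup>2 = (real k + 30) / l\<^sup>2"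
      using assms by (simp add: of_nat_diff field_simps power2_eq_square)
    then show ?thesis
      using assms(2) by (simp add: diff_diff_left field_simps eval_nat_numeral)
  qed
  ultimately show ?thesis
    by (simp only:)
qed

lemma var_inv_sq_gamma_le_large_shape:
  assumes "7 \<le> k" "0 < l" "0 < F"
  shows "var_inv_sq_gamma k l F \<le> 7 ^ 8 * l ^ 4 / real k ^ 5"
proof -
  define m where "m = k / l"
  define r where "r = (real k + 30) * fact (k - 7) / fact (k - 1)"
  have m: "0 < m"
    using assms by (simp add: m_def)
  have near: "has_bochner_integral (gamma_measure k l) (\<lambda>z. (z - m)\<^sup>2 / z ^ 6) (l ^ 4 * r)"
    unfolding m_def r_def using assms(1,2) by (rule has_bochner_integral_gamma_centered_sq_div_power_6)
  have "has_bochner_integral (gamma_measure k l) (\<lambda>z. (z - m)\<^sup>2 / m ^ 6) ((k / l\<^sup>2 + (k / l - m)\<^sup>2) / m ^ 6)"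
    using assms by (intro has_bochner_integral_divide has_bochner_integral_gamma_sq_dev) auto
  moreover have "(k / l\<^sup>2 + (k / l - m)\<^sup>2) / m ^ 6 = l ^ 4 / real k ^ 5"
    using assms by (simp add: m_def field_simps eval_nat_numeral)
  ultimately have far: "has_bochner_integral (gamma_measure k l) (\<lambda>z. (z - m)\<^sup>2 / m ^ 6) (l ^ 4 / real k ^ 5)"
    by simp
  have "has_bochner_integral (gamma_measure k l) (\<lambda>z. 4 * ((z - m)\<^sup>2 / z ^ 6 + (z - m)\<^sup>2 / m ^ 6))
      (4 * (l ^ 4 * r + l ^ 4 / real k ^ 5))"
    using near far by (intro has_bochner_integral_mult_right has_bochner_integral_add)
  moreover have "AE z in gamma_measure k l.
      (1 / (F + z)\<^sup>2 - 1 / (F + m)\<^sup>2)\<^sup>2 \<le> 4 * ((z - m)\<^sup>2 / z ^ 6 + (z - m)\<^sup>2 / m ^ 6)"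
    using AE_gamma_measure_pos
  proof eventually_elim
    case (elim z)
    then show ?case
      using inv_sq_shift_diff_sq_le[of F z m] assms(3) m by (simp add: distrib_left)
  qed
  ultimately have "var_inv_sq_gamma k l F \<le> 4 * (l ^ 4 * r + l ^ 4 / real k ^ 5)"
    using assms by (intro var_inv_sq_gamma_le_sq_dev) auto
  also have "\<dots> \<le> 4 * (l ^ 4 * (6 * 7 ^ 6 / real k ^ 5) + l ^ 4 / real k ^ 5)"
    using shifted_fact_ratio_le[OF assms(1), folded r_def] assms(2)
    by (intro mult_left_mono add_right_mono) auto
  also have "\<dots> \<le> 7 ^ 8 * l ^ 4 / real k ^ 5"
    using assms by (simp add: field_simps)
  finally show ?thesis .
qed

section \<open>The bounds of the theorem\<close>

lemma real_choose_two: "real (n choose 2) = real n * (real n - 1) / 2"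
proof -
  have "even (n * (n - 1))"
    by (cases "even n") auto
  then have "real (n choose 2) = real (n * (n - 1)) / 2"
    by (simp add: choose_two real_of_nat_div)
  then show ?thesis
    by (cases n) (auto simp: of_nat_diff algebra_simps)
qed

lemma rateZ_bounds:
  assumes "2 \<le> n" "1 \<le> k"
  shows "real n ^ 2 / (2 * real k) \<le> rateZ n k" "rateZ n k \<le> 2 * real n ^ 2 / real k"
proof -
  have e: "2 \<le> exp (1::real)" "exp (1::real) \<le> 3"
    using exp_ge_add_one_self[of 1] exp_le by auto
  have n: "2 \<le> real n"
    using assms(1) by simp
  have r: "rateZ n k = exp 1 * (real n * (real n - 1)) / (2 * real k)"
    by (simp add: rateZ_def real_choose_two)
  have "real n ^ 2 \<le> 2 * (real n * (real n - 1))"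
    using n by (simp add: power2_eq_square algebra_simps mult_right_mono)
  also have "\<dots> \<le> exp 1 * (real n * (real n - 1))"
    using e n by (intro mult_right_mono) auto
  finally show "real n ^ 2 / (2 * real k) \<le> rateZ n k"
    unfolding r by (intro divide_right_mono) auto
  have "exp 1 * (real n * (real n - 1)) \<le> 4 * (real n * real n)"
    using e n by (intro mult_mono) auto
  then have "rateZ n k \<le> 4 * (real n * real n) / (2 * real k)"
    unfolding r by (intro divide_right_mono) auto
  then show "rateZ n k \<le> 2 * real n ^ 2 / real k"
    by (simp add: power2_eq_square)
qed

lemma Fsum_pos:
  assumes "0 < f 1" "\<forall>i j. 1 \<le> i \<and> i \<le> j \<and> j \<le> n \<longrightarrow> f i \<le> f j" "1 \<le> j" "j \<le> n"
  shows "0 < Fsum f j"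
proof -
  have "f 1 \<le> (\<Sum>i = 1..j. f i)"
    using assms by (intro member_le_sum) (auto intro: order_trans[OF less_imp_le[OF assms(1)]])
  then show ?thesis
    unfolding Fsum_def using assms(1) by simp
qed

lemma ratio_le_twice_sum_ratio:
  fixes P1 P2 Q1 Q2 :: real
  assumes "0 < Q1" "0 \<le> Q2" "Q2 \<le> Q1" "0 \<le> P1" "0 \<le> P2"
  shows "P1 / Q1 \<le> 2 * ((P1 + P2) / (Q1 + Q2))"
proof -
  have "P1 * Q2 \<le> P1 * Q1" "0 \<le> P2 * Q1"
    using assms by (auto intro: mult_left_mono)
  then show ?thesis
    using assms by (simp add: field_simps) (smt (verit) mult_nonneg_nonneg)
qed

lemma le_sum_ratio:
  fixes V c P1 P2 Q1 Q2 :: real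
  assumes "0 < Q1" "0 < Q2" "0 \<le> P1" "0 \<le> P2" "0 \<le> c"
    and "Q2 \<le> Q1 \<Longrightarrow> V \<le> c * (P1 / Q1)" and "Q1 \<le> Q2 \<Longrightarrow> V \<le> c * (P2 / Q2)"
  shows "V \<le> 2 * c * ((P1 + P2) / (Q1 + Q2))"
proof (cases "Q2 \<le> Q1")
  case True
  then have "V \<le> c * (2 * ((P1 + P2) / (Q1 + Q2)))"
    using assms ratio_le_twice_sum_ratio[of Q1 Q2 P1 P2] by (meson less_imp_le mult_left_mono order_trans)
  then show ?thesis
    by (metis mult.assoc mult.commute)
next
  case False
  then have "V \<le> c * (2 * ((P2 + P1) / (Q2 + Q1)))"
    using assms ratio_le_twice_sum_ratio[of Q2 Q1 P2 P1] by (meson less_imp_le mult_left_mono order_trans not_le)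
  then show ?thesis
    by (metis add.commute mult.assoc mult.commute)
qed

lemma var_inv_sq_gamma_le_of_rate_ge:
  fixes N F l :: real
  assumes "1 \<le> k" "0 < N" "0 < F" "N ^ 2 / (2 * real k) \<le> l"
  shows "var_inv_sq_gamma k l F \<le> 16 * real k ^ 3 / (N ^ 4 * F ^ 6)"
proof -
  have l0: "0 < l"
    using assms by (intro less_le_trans[OF _ assms(4)]) auto
  have "var_inv_sq_gamma k l F \<le> 4 * real k / (l ^ 2 * F ^ 6)"
    using assms(1) l0 assms(3) by (rule var_inv_sq_gamma_le_Lipschitz)
  also have "\<dots> \<le> 4 * real k / ((N ^ 2 / (2 * real k)) ^ 2 * F ^ 6)"
    using assms l0 by (intro divide_left_mono mult_right_mono power_mono) auto
  also have "\<dots> = 16 * real k ^ 3 / (N ^ 4 * F ^ 6)"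
    using assms by (simp add: field_simps eval_nat_numeral)
  finally show ?thesis .
qed

lemma var_inv_sq_gamma_le_of_rate_le:
  fixes N F l :: real
  assumes k: "3 \<le> k" and F: "0 < F" and l: "0 < l" "l \<le> 2 * N ^ 2 / real k"
    and NF: "N ^ 2 * F \<le> real k ^ 2"
  shows "var_inv_sq_gamma k l F \<le> 16 * 7 ^ 8 * N ^ 6 / (real k ^ 7 * F)"
proof (cases "7 \<le> k")
  case True
  have "var_inv_sq_gamma k l F \<le> 7 ^ 8 * l ^ 4 / real k ^ 5"
    using True l(1) F by (rule var_inv_sq_gamma_le_large_shape)
  also have "\<dots> \<le> 7 ^ 8 * (2 * N ^ 2 / real k) ^ 4 / real k ^ 5"
    using l by (intro divide_right_mono mult_left_mono power_mono) auto
  also have "\<dots> = 16 * 7 ^ 8 * N ^ 6 * (N ^ 2 * F) / (real k ^ 9 * F)"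
    using F k by (simp add: field_simps eval_nat_numeral)
  also have "\<dots> \<le> 16 * 7 ^ 8 * N ^ 6 * real k ^ 2 / (real k ^ 9 * F)"
    using NF F k by (intro divide_right_mono mult_left_mono) auto
  also have "\<dots> = 16 * 7 ^ 8 * N ^ 6 / (real k ^ 7 * F)"
    using F k by (simp add: field_simps eval_nat_numeral)
  finally show ?thesis .
next
  case False
  have "var_inv_sq_gamma k l F \<le> l ^ 3 / F"
    using k l(1) F by (rule var_inv_sq_gamma_le_cube)
  also have "\<dots> \<le> (2 * N ^ 2 / real k) ^ 3 / F"
    using l F by (intro divide_right_mono power_mono) auto
  also have "\<dots> = 8 * real k ^ 4 * N ^ 6 / (real k ^ 7 * F)"
    using F k by (simp add: field_simps eval_nat_numeral)
  also have "\<dots> \<le> 16 * 7 ^ 8 * N ^ 6 / (real k ^ 7 * F)"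
  proof (intro divide_right_mono mult_right_mono)
    have "real k ^ 4 \<le> 6 ^ 4"
      using False by (intro power_mono) auto
    then show "8 * real k ^ 4 \<le> 16 * 7 ^ 8"
      by simp
  qed (use F in auto)
  finally show ?thesis .
qed

lemma var_inv_sq_gamma_bound_shape_ge3:
  fixes N F l :: real
  assumes k: "3 \<le> k" and N: "0 < N" and F: "0 < F"
    and l: "N ^ 2 / (2 * real k) \<le> l" "l \<le> 2 * N ^ 2 / real k"
  shows "var_inv_sq_gamma k l F \<le> 32 * 7 ^ 8 *
    ((real k ^ 3 * N ^ 12 * F ^ 3 + real k ^ 9 * N ^ 6) / (N ^ 16 * F ^ 9 + real k ^ 16 * F))"
proof -
  define K where "K = real k"
  have K: "3 \<le> K"
    using k by (simp add: K_def)
  have "var_inv_sq_gamma k l F \<le> 16 * K ^ 3 / (N ^ 4 * F ^ 6)"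
    using k N F l(1) unfolding K_def by (intro var_inv_sq_gamma_le_of_rate_ge) auto
  also have "\<dots> \<le> 16 * 7 ^ 8 * ((K ^ 3 * N ^ 12 * F ^ 3) / (N ^ 16 * F ^ 9))"
    using N F K by (simp add: field_simps eval_nat_numeral)
  finally have large_F: "var_inv_sq_gamma k l F \<le> 16 * 7 ^ 8 * ((K ^ 3 * N ^ 12 * F ^ 3) / (N ^ 16 * F ^ 9))" .
  have "var_inv_sq_gamma k l F \<le> 16 * 7 ^ 8 * ((K ^ 9 * N ^ 6) / (K ^ 16 * F))"
    if regime: "N ^ 16 * F ^ 9 \<le> K ^ 16 * F"
  proof -
    have "(N ^ 2 * F) ^ 8 * F = N ^ 16 * F ^ 9" "(K ^ 2) ^ 8 * F = K ^ 16 * F"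
      by (simp_all add: power_mult_distrib mult.assoc flip: power_mult power_Suc2)
    then have "(N ^ 2 * F) ^ 8 \<le> (K ^ 2) ^ 8"
      using regime F by (metis mult_le_cancel_right_pos)
    then have "N ^ 2 * F \<le> K ^ 2"
      using N F K by (subst (asm) power_mono_iff) auto
    then have "var_inv_sq_gamma k l F \<le> 16 * 7 ^ 8 * N ^ 6 / (K ^ 7 * F)"
      using k F l N unfolding K_def
      by (intro var_inv_sq_gamma_le_of_rate_le less_le_trans[OF _ l(1)]) auto
    also have "\<dots> = 16 * 7 ^ 8 * ((K ^ 9 * N ^ 6) / (K ^ 16 * F))"
      using F K by (simp add: field_simps eval_nat_numeral)
    finally show ?thesis .
  qed
  with large_F have "var_inv_sq_gamma k l F \<le> 2 * (16 * 7 ^ 8) *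
      ((K ^ 3 * N ^ 12 * F ^ 3 + K ^ 9 * N ^ 6) / (N ^ 16 * F ^ 9 + K ^ 16 * F))"
    using N F K by (intro le_sum_ratio) auto
  then show ?thesis
    by (simp add: K_def)
qed

lemma var_inv_sq_gamma_bound_shape1:
  fixes N F l :: real
  assumes N: "0 < N" and F: "0 < F" and l: "N ^ 2 / 2 \<le> l" "l \<le> 2 * N ^ 2"
  shows "var_inv_sq_gamma 1 l F \<le> 32 * 7 ^ 8 * ((N ^ 6 * F ^ 2 + N ^ 2) / (N ^ 8 * F ^ 7 + F ^ 3))"
proof -
  have l0: "0 < l"
    using N by (intro less_le_trans[OF _ l(1)]) auto
  have "var_inv_sq_gamma 1 l F \<le> 16 * 7 ^ 8 * ((N ^ 6 * F ^ 2) / (N ^ 8 * F ^ 7))"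
    if regime: "F ^ 3 \<le> N ^ 8 * F ^ 7"
  proof -
    have "1 * F ^ 3 \<le> (N ^ 2 * F) ^ 4 * F ^ 3"
      using regime by (simp add: power_mult_distrib mult.assoc flip: power_mult power_add)
    then have "1 ^ 4 \<le> (N ^ 2 * F) ^ 4"
      using F by simp
    then have NF: "1 \<le> N ^ 2 * F"
      using N F by (subst (asm) power_mono_iff) auto
    have "var_inv_sq_gamma 1 l F \<le> 16 / (N ^ 4 * F ^ 6)"
      using var_inv_sq_gamma_le_of_rate_ge[of 1 N F l] N F l(1) by simp
    also have "\<dots> = 16 * ((N ^ 6 * F ^ 2) / (N ^ 8 * F ^ 7)) / (N ^ 2 * F)"
      using N F by (simp add: field_simps eval_nat_numeral)
    also have "\<dots> \<le> 16 * ((N ^ 6 * F ^ 2) / (N ^ 8 * F ^ 7))"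
      using divide_left_mono[OF NF, of "16 * ((N ^ 6 * F ^ 2) / (N ^ 8 * F ^ 7))"] N F by simp
    also have "\<dots> \<le> 16 * 7 ^ 8 * ((N ^ 6 * F ^ 2) / (N ^ 8 * F ^ 7))"
      using N F by (intro mult_right_mono) auto
    finally show ?thesis .
  qed
  moreover have "var_inv_sq_gamma 1 l F \<le> 16 * 7 ^ 8 * (N ^ 2 / F ^ 3)"
  proof -
    have "var_inv_sq_gamma 1 l F \<le> l / (3 * F ^ 3)"
      using var_inv_sq_gamma_le_small_shape[of 1 l F] l0 F by (simp add: numeral_eq_Suc)
    also have "\<dots> \<le> 16 * 7 ^ 8 * (N ^ 2 / F ^ 3)"
      using l(2) F by (simp add: field_simps) (smt (verit) zero_le_power2)
    finally show ?thesis .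
  qed
  ultimately show ?thesis
    using le_sum_ratio[of "N ^ 8 * F ^ 7" "F ^ 3" "N ^ 6 * F ^ 2" "N ^ 2" "16 * 7 ^ 8"] N F by simp
qed

lemma var_inv_sq_gamma_bound_shape2:
  fixes N F l :: real
  assumes N: "0 < N" and F: "0 < F" and l: "N ^ 2 / 4 \<le> l" "l \<le> N ^ 2"
  shows "var_inv_sq_gamma 2 l F \<le> 32 * 7 ^ 8 * ((N ^ 10 * F ^ 3 + N ^ 4) / (N ^ 14 * F ^ 9 + F ^ 2))"
proof -
  have l0: "0 < l"
    using N by (intro less_le_trans[OF _ l(1)]) auto
  have "var_inv_sq_gamma 2 l F \<le> 16 * 7 ^ 8 * ((N ^ 10 * F ^ 3) / (N ^ 14 * F ^ 9))"
  proof -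
    have "var_inv_sq_gamma 2 l F \<le> 128 / (N ^ 4 * F ^ 6)"
      using var_inv_sq_gamma_le_of_rate_ge[of 2 N F l] N F l(1) by simp
    also have "\<dots> = 128 * ((N ^ 10 * F ^ 3) / (N ^ 14 * F ^ 9))"
      using N F by (simp add: field_simps eval_nat_numeral)
    also have "\<dots> \<le> 16 * 7 ^ 8 * ((N ^ 10 * F ^ 3) / (N ^ 14 * F ^ 9))"
      using N F by (intro mult_right_mono) auto
    finally show ?thesis .
  qed
  moreover have "var_inv_sq_gamma 2 l F \<le> 16 * 7 ^ 8 * (N ^ 4 / F ^ 2)"
  proof -
    have "var_inv_sq_gamma 2 l F \<le> l ^ 2 / (2 * F ^ 2)"
      using var_inv_sq_gamma_le_small_shape[of 2 l F] l0 F by (simp add: numeral_eq_Suc)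
    also have "\<dots> \<le> (N ^ 2) ^ 2 / (2 * F ^ 2)"
      using l(2) l0 F by (intro divide_right_mono power_mono) auto
    also have "\<dots> \<le> 16 * 7 ^ 8 * (N ^ 4 / F ^ 2)"
      using F by (simp add: field_simps flip: power_mult)
    finally show ?thesis .
  qed
  ultimately show ?thesis
    using le_sum_ratio[of "N ^ 14 * F ^ 9" "F ^ 2" "N ^ 10 * F ^ 3" "N ^ 4" "16 * 7 ^ 8"] N F by simp
qed

lemma varX_eq_var_inv_sq_gamma: "varX n f k = var_inv_sq_gamma k (rateZ n k) (Fsum f (n - k))"
  by (simp add: varX_def var_inv_sq_gamma_def)

theorem lemma15:
  shows "\<exists>C>0. \<forall>(n::nat) (f::nat \<Rightarrow> real).
     n \<ge> 2 \<and> 0 < f 1 \<and> (\<forall>i j. 1 \<le> i \<and> i \<le> j \<and> j \<le> n \<longrightarrow> f i \<le> f j) \<longrightarrow>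
       (\<forall>k\<in>{3..n-1}.
          varX n f k \<le> C * ((real k ^ 3 * real n ^ 12 * Fsum f (n - k) ^ 3 + real k ^ 9 * real n ^ 6)
                     / (real n ^ 16 * Fsum f (n - k) ^ 9 + real k ^ 16 * Fsum f (n - k))))
       \<and> varX n f 1 \<le> C * ((real n ^ 6 * Fsum f (n - 1) ^ 2 + real n ^ 2)
                     / (real n ^ 8 * Fsum f (n - 1) ^ 7 + Fsum f (n - 1) ^ 3))
       \<and> (3 \<le> n \<longrightarrow> varX n f 2 \<le> C * ((real n ^ 10 * Fsum f (n - 2) ^ 3 + real n ^ 4)
                     / (real n ^ 14 * Fsum f (n - 2) ^ 9 + Fsum f (n - 2) ^ 2)))"
proof (intro exI[of _ "32 * 7 ^ 8"] conjI allI impI ballI)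
  fix n :: nat and f :: "nat \<Rightarrow> real"
  assume "2 \<le> n \<and> 0 < f 1 \<and> (\<forall>i j. 1 \<le> i \<and> i \<le> j \<and> j \<le> n \<longrightarrow> f i \<le> f j)"
  then have n: "2 \<le> n" and F: "\<And>k. 1 \<le> k \<Longrightarrow> k < n \<Longrightarrow> 0 < Fsum f (n - k)"
    using Fsum_pos[of f n] by auto
  have N: "0 < real n"
    using n by simp
  show "varX n f k \<le> 32 * 7 ^ 8 * ((real k ^ 3 * real n ^ 12 * Fsum f (n - k) ^ 3 + real k ^ 9 * real n ^ 6)
      / (real n ^ 16 * Fsum f (n - k) ^ 9 + real k ^ 16 * Fsum f (n - k)))" if "k \<in> {3..n-1}" for k
    unfolding varX_eq_var_inv_sq_gamma
    using that N F[of k] rateZ_bounds[OF n, of k] by (intro var_inv_sq_gamma_bound_shape_ge3) auto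
  show "varX n f 1 \<le> 32 * 7 ^ 8 * ((real n ^ 6 * Fsum f (n - 1) ^ 2 + real n ^ 2)
      / (real n ^ 8 * Fsum f (n - 1) ^ 7 + Fsum f (n - 1) ^ 3))"
    unfolding varX_eq_var_inv_sq_gamma
    using n N F[of 1] rateZ_bounds[OF n, of 1] by (intro var_inv_sq_gamma_bound_shape1) auto
  show "varX n f 2 \<le> 32 * 7 ^ 8 * ((real n ^ 10 * Fsum f (n - 2) ^ 3 + real n ^ 4)
      / (real n ^ 14 * Fsum f (n - 2) ^ 9 + Fsum f (n - 2) ^ 2))" if "3 \<le> n"
    unfolding varX_eq_var_inv_sq_gamma
    using that N F[of 2] rateZ_bounds[OF n, of 2] by (intro var_inv_sq_gamma_bound_shape2) auto
qed simp

end
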